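(* Let $\nu\in\mathcal P_s$ with $\nu(\{0\})=0$, and let $t\ge a>0$ with $\nu(\{a\})=\nu(\{t\})=0$ and $G(t)\neq2G(a)$. Then $$I(1,a,t)=\tfrac12G(t)+\tfrac12H(a)\Psi\big(\tfrac at\big)+\tfrac12G(a),$$ and for all $n\ge2$ $$I(n,a,t)=C_1\Big(\frac{G(t)}2\Big)^{n-1}+G(a)^n\big[C_2n+C_3\big],$$ where $$C_1=I(1,a,t)-\frac{G(a)}{2G(a)-G(t)}\Big[G(a)+H(a)\Psi\big(\tfrac at\big)\Big(1-\frac{G(t)}{2G(a)-G(t)}\Big)\Big],\qquad C_2=\frac{H(a)\Psi(\frac at)}{2G(a)-G(t)},$$ $$C_3=\frac{H(a)\Psi(\frac at)+G(a)}{2G(a)-G(t)}-\frac{2H(a)G(a)\Psi(\frac at)}{(2G(a)-G(t))^2}.$$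
   Context: Fix $\alpha>0$. $\mathcal P_s$ is the set of symmetric Borel probability measures on $\mathbb R$. For $x\in\mathbb R$, $\widetilde\delta_x=\frac12(\delta_x+\delta_{-x})$. For a probability measure $\lambda=\mathcal L(X)$ and $c>0$, $T_c\lambda=\mathcal L(cX)$, and $T_0\lambda=\delta_0$. $\widetilde\pi_{2\alpha}$ is the symmetric Pareto probability measure with density $\alpha|y|^{-2\alpha-1}\mathbf 1_{\{|y|\ge1\}}$. The Kendall convolution $\vartriangle_\alpha$ on $\mathcal P_s$ is defined by $\widetilde\delta_x\vartriangle_\alpha\widetilde\delta_y=T_M\big(\varrho^\alpha\widetilde\pi_{2\alpha}+(1-\varrho^\alpha)\widetilde\delta_1\big)$ where $M=\max(|x|,|y|)$, $m=\min(|x|,|y|)$, $\varrho=m/M$ (and $\varrho=0$ if $M=0$), extended by $(\nu_1\vartriangle_\alpha\nu_2)(A)=\int\int(\widetilde\delta_x\vartriangle_\alpha\widetilde\delta_y)(A)\,\nu_1(dx)\nu_2(dy)$. For $x\in\mathbb R$ and $\mu\in\mathcal P_s$ we write $\delta_x\vartriangle_\alpha\mu:=\widetilde\delta_x\vartriangle_\alpha\mu$. $\Psi(t)=(1-|t|^\alpha)_+$. For the measure $\nu$: $F(t)=\nu((-\infty,t])$, $G(t)=\int_{\mathbb R}\Psi(x/t)\,\nu(dx)$ for $t\neq0$, and for $t>0$, $H(t)=2F(t)-1-G(t)=t^{-\alpha}\int_{[-t,t]}|x|^\alpha\nu(dx)$. The Kendall random walk with step distribution $\nu$ is the Markov chain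 $(X_n)_{n\ge0}$ with $X_0=0$ and transition kernel $\mathbb P(X_{k+1}\in A\mid X_k=x)=(\delta_x\vartriangle_\alpha\nu)(A)$. For $a,t>0$ and $n\ge1$, $I(n,a,t)=\int_{(-\infty,a]}\cdots\int_{(-\infty,a]}\Psi(x_n/t)\,(\delta_{x_{n-1}}\vartriangle_\alpha\nu)(dx_n)\cdots(\delta_{x_1}\vartriangle_\alpha\nu)(dx_2)\,\nu(dx_1)$ ($n$ integrations), i.e. $I(n,a,t)=\mathbb E\big[\Psi(X_n/t)\mathbf 1_{\{X_1\le a,\dots,X_n\le a\}}\big]$. *)

theory Defs
  imports "HOL-Probability.Probability"
begin

definition Psi :: "real \<Rightarrow> real \<Rightarrow> real" where
  "Psi \<alpha> s = max 0 (1 - \<bar>s\<bar> powr \<alpha>)"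

definition sym_prob :: "real measure \<Rightarrow> bool" where
  "sym_prob \<nu> \<longleftrightarrow> prob_space \<nu> \<and> sets \<nu> = sets borel \<and>
     (\<forall>A\<in>sets borel. emeasure \<nu> (uminus ` A) = emeasure \<nu> A)"

definition sym_delta :: "real \<Rightarrow> real measure" where
  "sym_delta x = measure_of UNIV (sets borel)
     (\<lambda>A. ennreal ((indicator A x + indicator A (-x)) / 2))"

definition sym_pareto :: "real \<Rightarrow> real measure" where
  "sym_pareto \<alpha> = density lborel
     (\<lambda>u. ennreal (\<alpha> * \<bar>u\<bar> powr (-2*\<alpha>-1) * indicator {u. \<bar>u\<bar> \<ge> 1} u))"

text \<open>(sym_delta x Kendall-convolved with sym_delta y)(A), i.e.
  T_M(rho^alpha pi_{2alpha} + (1-rho^alpha) sym_delta 1)(A), where T_c lambda (A) = lambda {u. c u \<in> A}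
  and T_0 lambda = delta_0.\<close>
definition kendall_dd :: "real \<Rightarrow> real \<Rightarrow> real \<Rightarrow> real set \<Rightarrow> real" where
  "kendall_dd \<alpha> x y A =
     (let M = max \<bar>x\<bar> \<bar>y\<bar>; m = min \<bar>x\<bar> \<bar>y\<bar>; \<rho> = (if M = 0 then 0 else m / M) in
      if M = 0 then indicator A 0
      else \<rho> powr \<alpha> * measure (sym_pareto \<alpha>) {u. M * u \<in> A}
           + (1 - \<rho> powr \<alpha>) * ((indicator A M + indicator A (-M)) / 2))"

definition kendall_conv :: "real \<Rightarrow> real measure \<Rightarrow> real measure \<Rightarrow> real measure" where
  "kendall_conv \<alpha> \<nu>1 \<nu>2 = measure_of UNIV (sets borel)
     (\<lambda>A. \<integral>\<^sup>+ x. \<integral>\<^sup>+ y. ennreal (kendall_dd \<alpha> x y A) \<partial>\<nu>2 \<partial>\<nu>1)"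

text \<open>Transition kernel delta_x Kendall-convolved with nu := sym_delta x Kendall-convolved with nu.\<close>
definition kendall_kernel :: "real \<Rightarrow> real measure \<Rightarrow> real \<Rightarrow> real measure" where
  "kendall_kernel \<alpha> \<nu> x = kendall_conv \<alpha> (sym_delta x) \<nu>"

definition distF :: "real measure \<Rightarrow> real \<Rightarrow> real" where
  "distF \<nu> t = measure \<nu> {..t}"

definition funG :: "real \<Rightarrow> real measure \<Rightarrow> real \<Rightarrow> real" where
  "funG \<alpha> \<nu> t = (\<integral> x. Psi \<alpha> (x / t) \<partial>\<nu>)"

definition funH :: "real \<Rightarrow> real measure \<Rightarrow> real \<Rightarrow> real" where
  "funH \<alpha> \<nu> t = 2 * distF \<nu> t - 1 - funG \<alpha> \<nu> t"

fun kendall_inner :: "real \<Rightarrow> real measure \<Rightarrow> real \<Rightarrow> real \<Rightarrow> nat \<Rightarrow> real \<Rightarrow> real" where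
  "kendall_inner \<alpha> \<nu> a t 0 x = Psi \<alpha> (x / t)"
| "kendall_inner \<alpha> \<nu> a t (Suc k) x =
     (\<integral> y. indicator {..a} y * kendall_inner \<alpha> \<nu> a t k y \<partial>(kendall_kernel \<alpha> \<nu> x))"

text \<open>I(n,a,t) for n \<ge> 1 (n integrations).\<close>
definition kendall_I :: "real \<Rightarrow> real measure \<Rightarrow> nat \<Rightarrow> real \<Rightarrow> real \<Rightarrow> real" where
  "kendall_I \<alpha> \<nu> n a t = (\<integral> x. indicator {..a} x * kendall_inner \<alpha> \<nu> a t (n - 1) x \<partial>\<nu>)"

end

theory Submission
  imports Defs
begin

text \<open>
  Integrating against \<open>\<delta>\<^sub>x \<triangle>\<^sub>\<alpha> \<nu>\<close> acts explicitly on two kinds of functions: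
  \<open>\<Psi>(\<cdot>/s)\<close> goes to \<open>G(s) \<Psi>(x/s)\<close>, and the indicator of \<open>[-a,a]\<close> goes to
  \<open>G(a) 1\<^bsub>[-a,a]\<^esub>(x) + H(a) \<Psi>(x/a)\<close>. Because \<open>\<nu>\<close> and the kernel are symmetric, the
  truncation \<open>1\<^bsub>(-\<infinity>,a]\<^esub>\<close> may be replaced by the even part of the truncated integrand,
  and for \<open>a \<le> t\<close> the even part of \<open>1\<^bsub>(-\<infinity>,a]\<^esub> (p \<Psi>(\<cdot>/t) + q 1\<^bsub>[-a,a]\<^esub> + r \<Psi>(\<cdot>/a))\<close>
  is again of this form. Hence all inner integrals of \<open>I(n,a,t)\<close> lie in this three-dimensional
  space, their coefficients obey a linear recursion with eigenvalues \<open>G(t)/2\<close> and \<open>G(a)\<close>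
  (the latter with a Jordan block), and \<open>I(n,a,t)\<close> is the value at \<open>0\<close>, i.e. the sum of the
  coefficients, since \<open>\<delta>\<^sub>0 \<triangle>\<^sub>\<alpha> \<nu> = \<nu>\<close>.
\<close>

section \<open>The symmetric Pareto distribution\<close>

definition sym_pareto_density :: "real \<Rightarrow> real \<Rightarrow> real" where
  "sym_pareto_density \<alpha> u = \<alpha> * \<bar>u\<bar> powr (-2 * \<alpha> - 1) * indicator {u. 1 \<le> \<bar>u\<bar>} u"

lemma sym_pareto_density_measurable [measurable]:
  "sym_pareto_density \<alpha> \<in> borel_measurable borel"
  unfolding sym_pareto_density_def by measurable

lemma sym_pareto_eq_density:
  "sym_pareto \<alpha> = density lborel (\<lambda>u. ennreal (sym_pareto_density \<alpha> u))"
  unfolding sym_pareto_def sym_pareto_density_def by (simp add: le_fun_def)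

lemma integral_powr_atLeastAtMost_1:
  fixes \<alpha> \<gamma> c :: real
  assumes "1 \<le> c" and "\<gamma> \<noteq> 0"
  shows "(\<integral>u. indicator {1..c} u * (\<alpha> * u powr (\<gamma> - 1)) \<partial>lborel) = \<alpha> / \<gamma> * (c powr \<gamma> - 1)"
proof -
  let ?F = "\<lambda>u. \<alpha> / \<gamma> * u powr \<gamma>"
  have "(\<integral>u. indicator {1..c} u *\<^sub>R (\<alpha> * u powr (\<gamma> - 1)) \<partial>lborel) = ?F c - ?F 1"
  proof (rule integral_FTC_atLeastAtMost[OF assms(1)])
    fix x assume x: "1 \<le> x" "x \<le> c"
    have "((\<lambda>u. u powr \<gamma>) has_real_derivative \<gamma> * x powr (\<gamma> - 1)) (at x)"
      using x by (intro has_real_derivative_powr) auto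
    then have "(?F has_real_derivative \<alpha> / \<gamma> * (\<gamma> * x powr (\<gamma> - 1))) (at x)"
      by (rule DERIV_cmult)
    then have "(?F has_real_derivative \<alpha> * x powr (\<gamma> - 1)) (at x)"
      using assms(2) by simp
    then show "(?F has_vector_derivative \<alpha> * x powr (\<gamma> - 1)) (at x within {1..c})"
      by (simp add: has_real_derivative_iff_has_vector_derivative[symmetric] has_field_derivative_at_within)
  qed (intro continuous_intros; auto)
  then show ?thesis by (simp add: right_diff_distrib)
qed

locale kendall_index =
  fixes \<alpha> :: real
  assumes alpha_pos: "0 < \<alpha>"
begin

abbreviation PI :: "real measure" where "PI \<equiv> sym_pareto \<alpha>"

lemma sym_pareto_density_nonneg: "0 \<le> sym_pareto_density \<alpha> u"
  using alpha_pos unfolding sym_pareto_density_def by (auto simp: indicator_def)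

lemma sets_sym_pareto [measurable_cong]: "sets PI = sets borel"
  unfolding sym_pareto_eq_density by simp

lemma space_sym_pareto [simp]: "space PI = UNIV"
  unfolding sym_pareto_eq_density by simp

lemma integral_sym_pareto:
  assumes [measurable]: "g \<in> borel_measurable borel"
  shows "(\<integral>u. g u \<partial>PI) = (\<integral>u. sym_pareto_density \<alpha> u * g u \<partial>lborel)"
  unfolding sym_pareto_eq_density
  by (subst integral_density) (auto simp: sym_pareto_density_nonneg)

lemma emeasure_sym_pareto:
  assumes [measurable]: "A \<in> sets borel"
  shows "emeasure PI A = (\<integral>\<^sup>+u. ennreal (sym_pareto_density \<alpha> u) * indicator A u \<partial>lborel)"
  unfolding sym_pareto_eq_density by (subst emeasure_density) auto

lemma emeasure_sym_pareto_UNIV: "emeasure PI UNIV = 1"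
proof -
  define f where "f u = indicator {1..} u * u powr (-2 * \<alpha> - 1)" for u :: real
  have [measurable]: "f \<in> borel_measurable borel" unfolding f_def by measurable
  have f_nonneg: "0 \<le> f u" for u unfolding f_def by (auto simp: indicator_def)
  have "((\<lambda>x. x powr (-2 * \<alpha> - 1)) has_integral -(1 powr (-2 * \<alpha> - 1 + 1)) / (-2 * \<alpha> - 1 + 1)) {1..}"
    by (rule has_integral_powr_to_inf) (use alpha_pos in auto)
  then have "(\<integral>\<^sup>+u. ennreal (f u) \<partial>lborel) = ennreal (-(1 powr (-2 * \<alpha> - 1 + 1)) / (-2 * \<alpha> - 1 + 1))"
    unfolding f_def by (intro nn_integral_has_integral_lebesgue) auto
  also have "-(1 powr (-2 * \<alpha> - 1 + 1)) / (-2 * \<alpha> - 1 + 1) = 1 / (2 * \<alpha>)"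
    using alpha_pos by simp
  finally have right: "(\<integral>\<^sup>+u. ennreal (f u) \<partial>lborel) = ennreal (1 / (2 * \<alpha>))" .
  have left: "(\<integral>\<^sup>+u. ennreal (f (-u)) \<partial>lborel) = ennreal (1 / (2 * \<alpha>))"
    using nn_integral_real_affine[of "\<lambda>u. ennreal (f u)" "-1" 0] right by simp
  have split: "ennreal (sym_pareto_density \<alpha> u) = ennreal \<alpha> * ennreal (f u) + ennreal \<alpha> * ennreal (f (-u))" for u
  proof -
    have "sym_pareto_density \<alpha> u = \<alpha> * f u + \<alpha> * f (-u)"
      unfolding sym_pareto_density_def f_def by (auto simp: indicator_def)
    then show ?thesis using alpha_pos f_nonneg[of u] f_nonneg[of "-u"]
      by (simp add: ennreal_plus[symmetric] ennreal_mult[symmetric] del: ennreal_plus)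
  qed
  have "emeasure PI UNIV = (\<integral>\<^sup>+u. ennreal \<alpha> * ennreal (f u) + ennreal \<alpha> * ennreal (f (-u)) \<partial>lborel)"
    by (subst emeasure_sym_pareto) (auto simp: split)
  also have "\<dots> = ennreal \<alpha> * ennreal (1 / (2 * \<alpha>)) + ennreal \<alpha> * ennreal (1 / (2 * \<alpha>))"
    by (subst nn_integral_add) (auto simp: nn_integral_cmult right left)
  also have "ennreal \<alpha> * ennreal (1 / (2 * \<alpha>)) = ennreal (1 / 2)"
    using alpha_pos by (simp add: ennreal_mult[symmetric])
  also have "ennreal (1 / 2) + ennreal (1 / 2) = 1"
    by (subst ennreal_plus[symmetric]) auto
  finally show ?thesis .
qed

lemma prob_space_sym_pareto: "prob_space PI"
  by (rule prob_spaceI) (simp add: emeasure_sym_pareto_UNIV)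

lemma distr_sym_pareto_uminus: "distr PI borel uminus = PI"
proof (rule measure_eqI)
  fix A assume "A \<in> sets (distr PI borel uminus)"
  then have A [measurable]: "A \<in> sets borel" by simp
  have "emeasure (distr PI borel uminus) A
      = (\<integral>\<^sup>+u. ennreal (sym_pareto_density \<alpha> u) * indicator (uminus -` A) u \<partial>lborel)"
    using measurable_sets[of uminus borel borel A]
    by (subst emeasure_distr) (auto intro!: emeasure_sym_pareto)
  also have "\<dots> = (\<integral>\<^sup>+u. ennreal (sym_pareto_density \<alpha> (-u)) * indicator A (-u) \<partial>lborel)"
    by (intro nn_integral_cong) (auto simp: sym_pareto_density_def indicator_def)
  also have "\<dots> = (\<integral>\<^sup>+u. ennreal (sym_pareto_density \<alpha> u) * indicator A u \<partial>lborel)"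
    using nn_integral_real_affine[of "\<lambda>u. ennreal (sym_pareto_density \<alpha> u) * indicator A u" "-1" 0]
    by simp
  finally show "emeasure (distr PI borel uminus) A = emeasure PI A"
    by (simp add: emeasure_sym_pareto)
qed (simp add: sets_sym_pareto)

lemma integral_sym_pareto_truncated_powr:
  assumes "\<beta> \<noteq> 2 * \<alpha>"
  shows "(\<integral>u. indicator {u. \<bar>u\<bar> \<le> c} u * \<bar>u\<bar> powr \<beta> \<partial>PI)
    = (if 1 \<le> c then 2 * \<alpha> / (\<beta> - 2 * \<alpha>) * (c powr (\<beta> - 2 * \<alpha>) - 1) else 0)"
proof -
  define h where "h u = indicator {1..c} u * (\<alpha> * u powr (\<beta> - 2 * \<alpha> - 1))" for u :: real
  have density_eq: "sym_pareto_density \<alpha> u * (indicator {u. \<bar>u\<bar> \<le> c} u * \<bar>u\<bar> powr \<beta>) = h u + h (-u)"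
    for u
  proof (cases "1 \<le> \<bar>u\<bar> \<and> \<bar>u\<bar> \<le> c")
    case True
    then have "\<bar>u\<bar> powr (-2 * \<alpha> - 1) * \<bar>u\<bar> powr \<beta> = \<bar>u\<bar> powr (\<beta> - 2 * \<alpha> - 1)"
      by (simp add: powr_add[symmetric] algebra_simps)
    with True show ?thesis
      by (cases "0 \<le> u") (auto simp: h_def sym_pareto_density_def indicator_def)
  qed (auto simp: h_def sym_pareto_density_def indicator_def)
  have "(\<integral>u. indicator {u. \<bar>u\<bar> \<le> c} u * \<bar>u\<bar> powr \<beta> \<partial>PI) = (\<integral>u. h u + h (-u) \<partial>lborel)"
    by (subst integral_sym_pareto) (auto simp: density_eq)
  also have "\<dots> = (if 1 \<le> c then 2 * \<alpha> / (\<beta> - 2 * \<alpha>) * (c powr (\<beta> - 2 * \<alpha>) - 1) else 0)"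
  proof (cases "1 \<le> c")
    case True
    have "continuous_on {1..c} (\<lambda>u. \<alpha> * u powr (\<beta> - 2 * \<alpha> - 1))"
      by (intro continuous_intros) auto
    then have h_int: "integrable lborel h"
      using borel_integrable_atLeastAtMost'[of 1 c "\<lambda>u. \<alpha> * u powr (\<beta> - 2 * \<alpha> - 1)"]
      unfolding h_def set_integrable_def by simp
    have "(\<integral>u. h (-u) \<partial>lborel) = (\<integral>u. h u \<partial>lborel)"
      using lborel_integral_real_affine[of "-1" h 0] by simp
    moreover have "integrable lborel (\<lambda>u. h (-u))"
      using lborel_integrable_real_affine[OF h_int, of "-1" 0] by simp
    moreover have "(\<integral>u. h u \<partial>lborel) = \<alpha> / (\<beta> - 2 * \<alpha>) * (c powr (\<beta> - 2 * \<alpha>) - 1)"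
      unfolding h_def using True assms by (intro integral_powr_atLeastAtMost_1) auto
    ultimately show ?thesis using True h_int by simp
  qed (auto simp: h_def indicator_def)
  finally show ?thesis .
qed


lemma measure_sym_pareto_abs_le:
  "measure PI {u. \<bar>u\<bar> \<le> c} = (if 1 \<le> c then 1 - c powr (-2 * \<alpha>) else 0)"
proof -
  have "measure PI {u. \<bar>u\<bar> \<le> c} = (\<integral>u. indicator {u. \<bar>u\<bar> \<le> c} u \<partial>PI)"
    by simp
  also have "\<dots> = (\<integral>u. indicator {u. \<bar>u\<bar> \<le> c} u * \<bar>u\<bar> powr 0 \<partial>PI)"
    by (subst (1 2) integral_sym_pareto)
      (auto intro!: Bochner_Integration.integral_cong simp: sym_pareto_density_def indicator_def)
  also have "\<dots> = (if 1 \<le> c then 1 - c powr (-2 * \<alpha>) else 0)"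
    using alpha_pos by (subst integral_sym_pareto_truncated_powr) (auto simp: field_simps)
  finally show ?thesis .
qed

end

lemma Psi_nonneg: "0 \<le> Psi \<alpha> s" and Psi_le_1: "Psi \<alpha> s \<le> 1"
  unfolding Psi_def by auto

lemma Psi_divide_abs: "Psi \<alpha> (z / s) = Psi \<alpha> (\<bar>z\<bar> / s)"
  unfolding Psi_def by (simp add: abs_divide)

lemma Psi_divide_measurable [measurable]: "(\<lambda>z. Psi \<alpha> (z / s)) \<in> borel_measurable borel"
  unfolding Psi_def by measurable

context kendall_index
begin

lemma Psi_divide_eq:
  assumes "0 < s"
  shows "Psi \<alpha> (z / s) = (if \<bar>z\<bar> \<le> s then 1 - (\<bar>z\<bar> / s) powr \<alpha> else 0)"
proof (cases "\<bar>z\<bar> \<le> s")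
  case True
  then have "(\<bar>z\<bar> / s) powr \<alpha> \<le> 1"
    using assms alpha_pos by (intro powr_le1) auto
  with True assms show ?thesis unfolding Psi_def by (simp add: abs_divide)
next
  case False
  then have "1 < (\<bar>z\<bar> / s) powr \<alpha>"
    using assms alpha_pos by simp
  with False assms show ?thesis unfolding Psi_def by (simp add: abs_divide)
qed

lemma Psi_zero [simp]: "Psi \<alpha> 0 = 1"
  unfolding Psi_def using alpha_pos by simp

lemma integral_sym_pareto_Psi_scaled:
  assumes M: "0 < M" and s: "0 < s"
  shows "(\<integral>u. Psi \<alpha> (M * u / s) \<partial>PI) = (if M \<le> s then (1 - (M / s) powr \<alpha>)\<^sup>2 else 0)"
proof -
  interpret prob_space PI by (rule prob_space_sym_pareto)
  define c where "c = s / M"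
  define w where "w = (M / s) powr \<alpha>"
  let ?ind = "\<lambda>u. indicator {u. \<bar>u\<bar> \<le> c} u :: real"
  have c_pos: "0 < c" using M s by (simp add: c_def)
  have Psi_eq: "Psi \<alpha> (M * u / s) = ?ind u - w * (?ind u * \<bar>u\<bar> powr \<alpha>)" for u
  proof -
    have "(\<bar>M * u\<bar> / s) powr \<alpha> = w * \<bar>u\<bar> powr \<alpha>"
      unfolding w_def using M s by (simp add: abs_mult powr_mult[symmetric])
    moreover have "\<bar>M * u\<bar> \<le> s \<longleftrightarrow> \<bar>u\<bar> \<le> c"
      unfolding c_def using M s by (simp add: abs_mult field_simps)
    ultimately show ?thesis using Psi_divide_eq[OF s, of "M * u"] by (auto simp: indicator_def)
  qed
  have "integrable PI ?ind"
    by (rule integrable_const_bound[where B = 1]) (auto simp: indicator_def)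
  moreover have "integrable PI (\<lambda>u. ?ind u * \<bar>u\<bar> powr \<alpha>)"
  proof (rule integrable_const_bound[where B = "c powr \<alpha>"])
    show "AE u in PI. norm (?ind u * \<bar>u\<bar> powr \<alpha>) \<le> c powr \<alpha>"
      using alpha_pos by (auto simp: indicator_def intro!: powr_mono2)
  qed measurable
  ultimately have "(\<integral>u. Psi \<alpha> (M * u / s) \<partial>PI)
      = measure PI {u. \<bar>u\<bar> \<le> c} - w * (\<integral>u. ?ind u * \<bar>u\<bar> powr \<alpha> \<partial>PI)"
    unfolding Psi_eq by simp
  also have "\<dots> = (if 1 \<le> c then 1 - c powr (-2 * \<alpha>) - w * (2 * (1 - c powr (-\<alpha>))) else 0)"
    using alpha_pos by (simp add: measure_sym_pareto_abs_le integral_sym_pareto_truncated_powr)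
  also have "\<dots> = (if M \<le> s then (1 - (M / s) powr \<alpha>)\<^sup>2 else 0)"
  proof -
    have w: "c powr (-\<alpha>) = w" unfolding c_def w_def using M s
      by (simp add: powr_minus_divide powr_divide)
    then have "c powr (-2 * \<alpha>) = w\<^sup>2"
      using powr_add[of c "-\<alpha>" "-\<alpha>"] by (simp add: power2_eq_square)
    moreover have "1 \<le> c \<longleftrightarrow> M \<le> s" unfolding c_def using M s by (simp add: field_simps)
    ultimately show ?thesis using w unfolding w_def by (simp add: power2_eq_square algebra_simps)
  qed
  finally show ?thesis .
qed

lemma integral_sym_pareto_interval_scaled:
  assumes M: "0 < M" and a: "0 < a"
  shows "(\<integral>u. indicator {-a..a} (M * u) \<partial>PI) = (if M \<le> a then 1 - (M / a) powr (2 * \<alpha>) else 0)"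
proof -
  define c where "c = a / M"
  have "(\<lambda>u. indicator {-a..a} (M * u) :: real) = indicator {u. \<bar>u\<bar> \<le> c}"
    using M by (auto simp: c_def abs_mult abs_le_iff field_simps split: split_indicator)
  then have "(\<integral>u. indicator {-a..a} (M * u) \<partial>PI) = measure PI {u. \<bar>u\<bar> \<le> c}"
    by simp
  also have "\<dots> = (if 1 \<le> c then 1 - c powr (-2 * \<alpha>) else 0)"
    by (rule measure_sym_pareto_abs_le)
  also have "\<dots> = (if M \<le> a then 1 - (M / a) powr (2 * \<alpha>) else 0)"
    using M a by (simp add: c_def field_simps powr_minus_divide powr_divide)
  finally show ?thesis .
qed

end

section \<open>The transition kernel\<close>

definition unif01 :: "real measure" where
  "unif01 = uniform_measure lborel {0..1}"

lemma prob_space_unif01: "prob_space unif01"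
  unfolding unif01_def by (rule prob_space_uniform_measure) auto

lemma sets_unif01 [measurable_cong]: "sets unif01 = sets borel"
  unfolding unif01_def by simp

lemma space_unif01 [simp]: "space unif01 = UNIV"
  unfolding unif01_def by simp

lemma measure_unif01_lessThan:
  assumes "0 \<le> d" and "d \<le> 1"
  shows "measure unif01 {..<d} = d"
proof -
  have "measure unif01 {..<d} = measure lborel ({0..1} \<inter> {..<d}) / measure lborel {0..1::real}"
    unfolding unif01_def by (rule measure_uniform_measure) auto
  also have "{0..1} \<inter> {..<d} = {0..<d}" using assms by auto
  finally show ?thesis using assms by simp
qed

lemma integral_unif01_threshold:
  assumes "0 \<le> d" and "d \<le> 1"
  shows "(\<integral>v. (if v < d then A else B) \<partial>unif01) = d * A + (1 - d) * (B :: real)"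
proof -
  interpret prob_space unif01 by (rule prob_space_unif01)
  have "(\<lambda>v. if v < d then A else B) = (\<lambda>v. B + (A - B) * indicator {..<d} v)"
    by (auto simp: indicator_def)
  moreover have "integrable unif01 (\<lambda>v. (A - B) * indicator {..<d} v)"
    by (intro integrable_mult_right integrable_real_indicator) (auto simp: less_top[symmetric])
  ultimately have "(\<integral>v. (if v < d then A else B) \<partial>unif01) = B + (A - B) * d"
    using assms prob_space by (simp add: measure_unif01_lessThan)
  then show ?thesis by (simp add: algebra_simps)
qed

lemma integral_unif01_two_thresholds:
  assumes "0 \<le> c" and "c \<le> 1"
  shows "(\<integral>v. (if v < c then A else if v < (1 + c) / 2 then B else C) \<partial>unif01)
    = c * A + (1 - c) / 2 * B + (1 - c) / 2 * (C :: real)"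
proof -
  interpret prob_space unif01 by (rule prob_space_unif01)
  have "(\<lambda>v. if v < c then A else if v < (1 + c) / 2 then B else C)
      = (\<lambda>v. C + ((B - C) * indicator {..<(1 + c) / 2} v + (A - B) * indicator {..<c} v))"
    using assms by (auto simp: indicator_def)
  moreover have "integrable unif01 (\<lambda>v. (A - B) * indicator {..<c} v)"
    and "integrable unif01 (\<lambda>v. (B - C) * indicator {..<(1 + c) / 2} v)"
    by (intro integrable_mult_right integrable_real_indicator; simp add: less_top[symmetric])+
  ultimately have "(\<integral>v. (if v < c then A else if v < (1 + c) / 2 then B else C) \<partial>unif01)
      = C + ((B - C) * ((1 + c) / 2) + (A - B) * c)"
    using assms prob_space by (simp add: measure_unif01_lessThan)
  then show ?thesis by (simp add: field_simps)
qed

definition kendall_weight :: "real \<Rightarrow> real \<Rightarrow> real \<Rightarrow> real" where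
  "kendall_weight \<alpha> x y =
     (if max \<bar>x\<bar> \<bar>y\<bar> = 0 then 0 else min \<bar>x\<bar> \<bar>y\<bar> / max \<bar>x\<bar> \<bar>y\<bar>) powr \<alpha>"

text \<open>\<open>kendall_mean \<alpha> f x y\<close> is the integral of \<open>f\<close> against \<open>\<delta>\<^sub>x \<triangle>\<^sub>\<alpha> \<delta>\<^sub>y\<close>.\<close>

definition kendall_mean :: "real \<Rightarrow> (real \<Rightarrow> real) \<Rightarrow> real \<Rightarrow> real \<Rightarrow> real" where
  "kendall_mean \<alpha> f x y =
     kendall_weight \<alpha> x y * (\<integral>u. f (max \<bar>x\<bar> \<bar>y\<bar> * u) \<partial>sym_pareto \<alpha>)
     + (1 - kendall_weight \<alpha> x y) / 2 * (f (max \<bar>x\<bar> \<bar>y\<bar>) + f (- max \<bar>x\<bar> \<bar>y\<bar>))"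

text \<open>
  The Kendall convolution is only given through \<open>measure_of\<close>, so to integrate against it we
  realise \<open>\<delta>\<^sub>x \<triangle>\<^sub>\<alpha> \<nu>\<close> as the image of \<open>\<nu> \<otimes> \<pi>\<^sub>2\<^sub>\<alpha> \<otimes> U[0,1]\<close>: the uniform
  coordinate \<open>v\<close> selects the Pareto branch with probability \<open>\<rho>\<^sup>\<alpha>\<close> and \<open>\<plusminus>max |x| |y|\<close>
  with probability \<open>(1 - \<rho>\<^sup>\<alpha>)/2\<close> each.
\<close>

definition kendall_sample :: "real \<Rightarrow> real \<Rightarrow> real \<times> real \<times> real \<Rightarrow> real" where
  "kendall_sample \<alpha> x w = (case w of (y, u, v) \<Rightarrow> max \<bar>x\<bar> \<bar>y\<bar> *
     (if v < kendall_weight \<alpha> x y then u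
      else if v < (1 + kendall_weight \<alpha> x y) / 2 then 1 else -1))"

lemma kendall_weight_measurable [measurable]: "(\<lambda>y. kendall_weight \<alpha> x y) \<in> borel_measurable borel"
  unfolding kendall_weight_def by measurable

lemma kendall_sample_measurable [measurable]:
  "kendall_sample \<alpha> x \<in> borel_measurable (M \<Otimes>\<^sub>M (N \<Otimes>\<^sub>M L))"
  if [measurable_cong]: "sets M = sets borel" "sets N = sets borel" "sets L = sets borel"
  unfolding kendall_sample_def by measurable

lemma kendall_weight_nonneg: "0 \<le> kendall_weight \<alpha> x y"
  and kendall_weight_le_1: "0 \<le> \<alpha> \<Longrightarrow> kendall_weight \<alpha> x y \<le> 1"
  unfolding kendall_weight_def by (auto intro!: powr_le1 simp: divide_le_eq_1)

lemma kendall_weight_eq: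
  "max \<bar>x\<bar> \<bar>y\<bar> \<noteq> 0 \<Longrightarrow> kendall_weight \<alpha> x y = (min \<bar>x\<bar> \<bar>y\<bar> / max \<bar>x\<bar> \<bar>y\<bar>) powr \<alpha>"
  unfolding kendall_weight_def by simp

lemma kendall_weight_zero_left [simp]: "kendall_weight \<alpha> 0 y = 0"
  unfolding kendall_weight_def by simp

context kendall_index
begin

lemma kendall_mean_measurable [measurable]:
  assumes [measurable]: "f \<in> borel_measurable borel"
  shows "(\<lambda>y. kendall_mean \<alpha> f x y) \<in> borel_measurable borel"
proof -
  have "(\<lambda>(y, u). f (max \<bar>x\<bar> \<bar>y\<bar> * u)) \<in> borel_measurable (borel \<Otimes>\<^sub>M PI)"
    by measurable
  then have [measurable]: "(\<lambda>y. \<integral>u. f (max \<bar>x\<bar> \<bar>y\<bar> * u) \<partial>PI) \<in> borel_measurable borel"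
    using sigma_finite_measure.borel_measurable_lebesgue_integral[
        OF prob_space_imp_sigma_finite[OF prob_space_sym_pareto], of "\<lambda>y u. f (max \<bar>x\<bar> \<bar>y\<bar> * u)" borel]
    by simp
  show ?thesis unfolding kendall_mean_def by measurable
qed

lemma kendall_dd_eq_kendall_mean:
  assumes [measurable]: "A \<in> sets borel"
  shows "kendall_dd \<alpha> x y A = kendall_mean \<alpha> (indicator A) x y"
proof -
  have "(\<lambda>u. indicator A (max \<bar>x\<bar> \<bar>y\<bar> * u) :: real) = indicator {u. max \<bar>x\<bar> \<bar>y\<bar> * u \<in> A}"
    by (auto simp: indicator_def)
  then have "(\<integral>u. indicator A (max \<bar>x\<bar> \<bar>y\<bar> * u) \<partial>PI) = measure PI {u. max \<bar>x\<bar> \<bar>y\<bar> * u \<in> A}"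
    by simp
  then show ?thesis
    using alpha_pos
    by (cases "max \<bar>x\<bar> \<bar>y\<bar> = 0")
      (simp_all add: kendall_dd_def kendall_mean_def kendall_weight_def Let_def field_simps)
qed


lemma kendall_mean_Psi:
  assumes s: "0 < s"
  shows "kendall_mean \<alpha> (\<lambda>z. Psi \<alpha> (z / s)) x y = Psi \<alpha> (x / s) * Psi \<alpha> (y / s)"
proof -
  define M where "M = max \<bar>x\<bar> \<bar>y\<bar>"
  define m where "m = min \<bar>x\<bar> \<bar>y\<bar>"
  have mM: "0 \<le> m" "m \<le> M" by (auto simp: M_def m_def)
  have prod: "Psi \<alpha> (x / s) * Psi \<alpha> (y / s) = Psi \<alpha> (M / s) * Psi \<alpha> (m / s)"
    unfolding M_def m_def by (subst (1 2) Psi_divide_abs) (auto simp: max_def min_def)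
  have Psi_minus: "Psi \<alpha> (- M / s) = Psi \<alpha> (M / s)"
    unfolding Psi_def by simp
  show ?thesis
  proof (cases "M = 0")
    case True
    with mM prod show ?thesis by (simp add: kendall_mean_def kendall_weight_def M_def[symmetric])
  next
    case False
    with mM have M: "0 < M" by simp
    define c where "c = (m / M) powr \<alpha>"
    define w where "w = (M / s) powr \<alpha>"
    have weight: "kendall_weight \<alpha> x y = c"
      using False kendall_weight_eq[of x y \<alpha>] by (simp add: c_def M_def m_def)
    have cw: "c * w = (m / s) powr \<alpha>"
      unfolding c_def w_def using M s mM by (simp add: powr_mult[symmetric])
    have "kendall_mean \<alpha> (\<lambda>z. Psi \<alpha> (z / s)) x y
        = c * (\<integral>u. Psi \<alpha> (M * u / s) \<partial>PI) + (1 - c) / 2 * (Psi \<alpha> (M / s) + Psi \<alpha> (- M / s))"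
      by (simp add: kendall_mean_def weight M_def)
    also have "\<dots> = Psi \<alpha> (M / s) * Psi \<alpha> (m / s)"
    proof (cases "M \<le> s")
      case True
      then have M_eq: "Psi \<alpha> (M / s) = 1 - w" and m_eq: "Psi \<alpha> (m / s) = 1 - c * w"
        using Psi_divide_eq[OF s, of M] Psi_divide_eq[OF s, of m] M mM cw by (simp_all add: w_def)
      show ?thesis
        unfolding integral_sym_pareto_Psi_scaled[OF M s] Psi_minus M_eq m_eq
        using True by (simp add: w_def power2_eq_square field_simps)
    next
      case False
      then have M_eq: "Psi \<alpha> (M / s) = 0" using Psi_divide_eq[OF s, of M] M by simp
      show ?thesis
        unfolding integral_sym_pareto_Psi_scaled[OF M s] Psi_minus M_eq using False by simp
    qed
    finally show ?thesis using prod by simp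
  qed
qed

lemma kendall_mean_interval:
  assumes a: "0 < a"
  shows "kendall_mean \<alpha> (indicator {-a..a}) x y
    = indicator {-a..a} x * indicator {-a..a} y * (1 - (\<bar>x\<bar> / a) powr \<alpha> * (\<bar>y\<bar> / a) powr \<alpha>)"
proof -
  define M where "M = max \<bar>x\<bar> \<bar>y\<bar>"
  define m where "m = min \<bar>x\<bar> \<bar>y\<bar>"
  have mM: "0 \<le> m" "m \<le> M" by (auto simp: M_def m_def)
  have ind: "indicator {-a..a} z = (if \<bar>z\<bar> \<le> a then 1 else (0 :: real))" for z
    by (auto simp: indicator_def abs_le_iff)
  have prod: "indicator {-a..a} x * indicator {-a..a} y * (1 - (\<bar>x\<bar> / a) powr \<alpha> * (\<bar>y\<bar> / a) powr \<alpha>)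
      = (if M \<le> a then 1 - (M / a) powr \<alpha> * (m / a) powr \<alpha> else 0)"
    unfolding M_def m_def ind by (auto simp: max_def min_def)
  show ?thesis
  proof (cases "M = 0")
    case True
    with mM prod a alpha_pos show ?thesis
      by (simp add: kendall_mean_def kendall_weight_def M_def[symmetric])
  next
    case False
    with mM have M: "0 < M" by simp
    define c where "c = (m / M) powr \<alpha>"
    define w where "w = (M / a) powr \<alpha>"
    have weight: "kendall_weight \<alpha> x y = c"
      using False kendall_weight_eq[of x y \<alpha>] by (simp add: c_def M_def m_def)
    have cw: "c * w = (m / a) powr \<alpha>"
      unfolding c_def w_def using M a mM by (simp add: powr_mult[symmetric])
    have w2: "(M / a) powr (2 * \<alpha>) = w\<^sup>2"
      unfolding w_def using powr_add[of "M / a" \<alpha> \<alpha>] by (simp add: power2_eq_square)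
    have "kendall_mean \<alpha> (indicator {-a..a}) x y
        = c * (\<integral>u. indicator {-a..a} (M * u) \<partial>PI)
          + (1 - c) / 2 * (indicator {-a..a} M + indicator {-a..a} (- M))"
      by (simp add: kendall_mean_def weight M_def)
    also have "\<dots> = (if M \<le> a then 1 - (M / a) powr \<alpha> * (m / a) powr \<alpha> else 0)"
      unfolding integral_sym_pareto_interval_scaled[OF M a] unfolding w2 ind
      using M cw[symmetric] w_def by (auto simp: power2_eq_square field_simps)
    finally show ?thesis using prod by simp
  qed
qed

lemma kendall_mean_even_part:
  assumes [measurable]: "f \<in> borel_measurable borel" and bounded: "\<And>z. \<bar>f z\<bar> \<le> B"
  shows "kendall_mean \<alpha> (\<lambda>z. (f z + f (-z)) / 2) x y = kendall_mean \<alpha> f x y"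
proof -
  interpret prob_space PI by (rule prob_space_sym_pareto)
  let ?M = "max \<bar>x\<bar> \<bar>y\<bar>"
  have "integrable PI (\<lambda>u. f (?M * u))" and "integrable PI (\<lambda>u. f (- (?M * u)))"
    by (intro integrable_const_bound[where B = B]; simp add: bounded)+
  moreover have "(\<integral>u. f (- (?M * u)) \<partial>PI) = (\<integral>u. f (?M * u) \<partial>PI)"
    using integral_distr[of uminus PI borel "\<lambda>u. f (?M * u)"]
    by (simp add: distr_sym_pareto_uminus)
  ultimately show ?thesis by (simp add: kendall_mean_def field_simps)
qed

lemma kendall_mean_zero_left: "kendall_mean \<alpha> f 0 y = (f y + f (-y)) / 2"
  by (cases "0 \<le> y") (simp_all add: kendall_mean_def add.commute)

lemma kendall_dd_bounds: "0 \<le> kendall_dd \<alpha> x y A \<and> kendall_dd \<alpha> x y A \<le> 1"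
proof -
  interpret prob_space PI by (rule prob_space_sym_pareto)
  let ?w = "kendall_weight \<alpha> x y" and ?M = "max \<bar>x\<bar> \<bar>y\<bar>"
  define m where "m = measure PI {u. ?M * u \<in> A}"
  define i where "i = (indicator A ?M + indicator A (- ?M) :: real) / 2"
  have "0 \<le> ?w" "?w \<le> 1" "0 \<le> m" "m \<le> 1" "0 \<le> i" "i \<le> 1"
    using kendall_weight_nonneg kendall_weight_le_1 alpha_pos
    by (auto simp: m_def i_def indicator_def)
  then have "0 \<le> ?w * m + (1 - ?w) * i \<and> ?w * m + (1 - ?w) * i \<le> ?w * 1 + (1 - ?w) * 1"
    by (intro conjI add_nonneg_nonneg add_mono mult_nonneg_nonneg mult_left_mono) auto
  moreover have "kendall_dd \<alpha> x y A = ?w * m + (1 - ?w) * i"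
    using alpha_pos
    by (cases "?M = 0") (simp_all add: kendall_dd_def kendall_weight_def Let_def m_def i_def)
  ultimately show ?thesis by simp
qed

end

lemma sym_delta_eq_distr_unif01:
  "sym_delta x = distr unif01 borel (\<lambda>v. if v < 1 / 2 then x else -x)"
    (is "_ = ?D")
proof -
  interpret D: prob_space ?D by (intro prob_space.prob_space_distr prob_space_unif01) simp
  have "sym_delta x = measure_of UNIV (sets borel) (emeasure ?D)"
    unfolding sym_delta_def
  proof (rule measure_of_eq)
    fix A :: "real set" assume "A \<in> sigma_sets UNIV (sets borel)"
    then have [measurable]: "A \<in> sets borel" using sets.sigma_sets_eq[of "borel :: real measure"] by simp
    have "measure ?D A = (\<integral>z. indicator A z \<partial>?D)"
      by simp
    also have "\<dots> = (\<integral>v. indicator A (if v < 1 / 2 then x else -x) \<partial>unif01)"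
      by (rule integral_distr) auto
    also have "\<dots> = (\<integral>v. (if v < 1 / 2 then indicator A x else indicator A (-x)) \<partial>unif01)"
      by (intro Bochner_Integration.integral_cong) auto
    also have "\<dots> = (indicator A x + indicator A (-x)) / 2"
      by (subst integral_unif01_threshold) auto
    finally show "ennreal ((indicator A x + indicator A (-x)) / 2) = emeasure ?D A"
      by (metis D.emeasure_eq_measure)
  qed auto
  also have "\<dots> = ?D" using measure_of_of_measure[of ?D] by simp
  finally show ?thesis .
qed

lemma prob_space_sym_delta: "prob_space (sym_delta x)"
  unfolding sym_delta_eq_distr_unif01
  by (intro prob_space.prob_space_distr prob_space_unif01) simp

locale kendall_walk = kendall_index +
  fixes \<nu> :: "real measure"
  assumes sym_prob: "sym_prob \<nu>"
begin

lemma prob_space_nu: "prob_space \<nu>"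
  using sym_prob unfolding sym_prob_def by auto

lemma sets_nu [measurable_cong]: "sets \<nu> = sets borel"
  using sym_prob unfolding sym_prob_def by auto

lemma space_nu [simp]: "space \<nu> = UNIV"
  using sets_eq_imp_space_eq[OF sets_nu] by simp

lemma distr_nu_uminus: "distr \<nu> borel uminus = \<nu>"
proof (rule measure_eqI)
  fix A assume "A \<in> sets (distr \<nu> borel uminus)"
  then have [measurable]: "A \<in> sets borel" by simp
  have "uminus -` A = uminus ` A"
    by (auto simp: image_iff intro!: bexI[of _ "- _"])
  then show "emeasure (distr \<nu> borel uminus) A = emeasure \<nu> A"
    using sym_prob unfolding sym_prob_def by (subst emeasure_distr) auto
qed (simp add: sets_nu)

lemma integral_nu_even_part:
  fixes f :: "real \<Rightarrow> real"
  assumes [measurable]: "f \<in> borel_measurable borel" and bounded: "\<And>z. \<bar>f z\<bar> \<le> B"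
  shows "(\<integral>z. (f z + f (-z)) / 2 \<partial>\<nu>) = (\<integral>z. f z \<partial>\<nu>)"
proof -
  interpret prob_space \<nu> by (rule prob_space_nu)
  have "integrable \<nu> f" and "integrable \<nu> (\<lambda>z. f (-z))"
    by (intro integrable_const_bound[where B = B]; simp add: bounded)+
  moreover have "(\<integral>z. f (-z) \<partial>\<nu>) = (\<integral>z. f z \<partial>\<nu>)"
    using integral_distr[of uminus \<nu> borel f] by (simp add: distr_nu_uminus)
  ultimately show ?thesis by simp
qed

lemma measure_nu_interval:
  assumes "0 \<le> a"
  shows "measure \<nu> {-a..a} = 2 * distF \<nu> a - 1"
proof -
  interpret prob_space \<nu> by (rule prob_space_nu)
  have "measure \<nu> {a<..} = measure \<nu> {..<-a}"
    by (subst distr_nu_uminus[symmetric]) (simp add: measure_distr sets_nu vimage_def less_minus_iff lessThan_def)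
  moreover have "measure \<nu> {a<..} = 1 - measure \<nu> {..a}"
    using prob_compl[of "{..a}"] by (simp add: sets_nu Compl_eq_Diff_UNIV[symmetric])
  moreover have "{..a} = {..<-a} \<union> {-a..a}"
    using assms by auto
  then have "measure \<nu> {..a} = measure \<nu> {..<-a} + measure \<nu> {-a..a}"
    by (simp only:) (rule finite_measure_Union; auto simp: sets_nu)
  ultimately show ?thesis unfolding distF_def by simp
qed


definition kernel_rep :: "real \<Rightarrow> real measure" where
  "kernel_rep x = distr (\<nu> \<Otimes>\<^sub>M (PI \<Otimes>\<^sub>M unif01)) borel (kendall_sample \<alpha> x)"

lemma prob_space_kernel_rep: "prob_space (kernel_rep x)"
  unfolding kernel_rep_def
  by (intro prob_space.prob_space_distr prob_space_pair prob_space_nu prob_space_sym_pareto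
      prob_space_unif01) (simp add: sets_nu sets_sym_pareto sets_unif01)

lemma integral_kernel_rep:
  assumes [measurable]: "f \<in> borel_measurable borel" and bounded: "\<And>z. \<bar>f z\<bar> \<le> B"
  shows "(\<integral>z. f z \<partial>kernel_rep x) = (\<integral>y. kendall_mean \<alpha> f x y \<partial>\<nu>)"
proof -
  interpret inner: pair_prob_space PI unif01
    by (simp add: pair_prob_space_def pair_sigma_finite_def prob_space_imp_sigma_finite
        prob_space_sym_pareto prob_space_unif01)
  interpret outer: pair_prob_space \<nu> "PI \<Otimes>\<^sub>M unif01"
    using prob_space_nu prob_space_pair[OF prob_space_sym_pareto prob_space_unif01]
    by (simp add: pair_prob_space_def pair_sigma_finite_def prob_space_imp_sigma_finite)
  have "(\<integral>z. f z \<partial>kernel_rep x) = (\<integral>w. f (kendall_sample \<alpha> x w) \<partial>(\<nu> \<Otimes>\<^sub>M (PI \<Otimes>\<^sub>M unif01)))"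
    unfolding kernel_rep_def by (rule integral_distr) measurable
  also have "\<dots> = (\<integral>y. (\<integral>w. f (kendall_sample \<alpha> x (y, w)) \<partial>(PI \<Otimes>\<^sub>M unif01)) \<partial>\<nu>)"
    by (intro outer.integral_fst'[symmetric] outer.P.integrable_const_bound[where B = B])
      (auto simp: bounded)
  also have "\<dots> = (\<integral>y. kendall_mean \<alpha> f x y \<partial>\<nu>)"
  proof (rule Bochner_Integration.integral_cong[OF refl])
    fix y
    let ?w = "kendall_weight \<alpha> x y" and ?M = "max \<bar>x\<bar> \<bar>y\<bar>"
    have w: "0 \<le> ?w" "?w \<le> 1"
      using kendall_weight_nonneg kendall_weight_le_1 alpha_pos by auto
    have "(\<integral>w. f (kendall_sample \<alpha> x (y, w)) \<partial>(PI \<Otimes>\<^sub>M unif01))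
        = (\<integral>u. (\<integral>v. f (kendall_sample \<alpha> x (y, u, v)) \<partial>unif01) \<partial>PI)"
      by (intro inner.integral_fst'[symmetric] inner.P.integrable_const_bound[where B = B])
        (auto simp: bounded)
    also have "\<dots> = (\<integral>u. ?w * f (?M * u) + (1 - ?w) / 2 * (f ?M + f (- ?M)) \<partial>PI)"
    proof (rule Bochner_Integration.integral_cong[OF refl])
      fix u
      have "(\<lambda>v. f (kendall_sample \<alpha> x (y, u, v)))
          = (\<lambda>v. if v < ?w then f (?M * u) else if v < (1 + ?w) / 2 then f ?M else f (- ?M))"
        by (auto simp: kendall_sample_def)
      then show "(\<integral>v. f (kendall_sample \<alpha> x (y, u, v)) \<partial>unif01)
          = ?w * f (?M * u) + (1 - ?w) / 2 * (f ?M + f (- ?M))"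
        using integral_unif01_two_thresholds[OF w] by (simp add: algebra_simps)
    qed
    also have "\<dots> = kendall_mean \<alpha> f x y"
      using inner.M1.integrable_const_bound[where B = B and f = "\<lambda>u. f (?M * u)"] bounded
      by (simp add: kendall_mean_def inner.M1.prob_space[unfolded space_sym_pareto])
    finally show "(\<integral>w. f (kendall_sample \<alpha> x (y, w)) \<partial>(PI \<Otimes>\<^sub>M unif01)) = kendall_mean \<alpha> f x y" .
  qed
  finally show ?thesis .
qed


lemma kendall_kernel_eq_kernel_rep: "kendall_kernel \<alpha> \<nu> x = kernel_rep x"
proof -
  interpret K: prob_space "kernel_rep x" by (rule prob_space_kernel_rep)
  interpret prob_space \<nu> by (rule prob_space_nu)
  have sets_K: "sets (kernel_rep x) = sets borel" by (simp add: kernel_rep_def)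
  have "kendall_kernel \<alpha> \<nu> x = measure_of UNIV (sets borel) (emeasure (kernel_rep x))"
    unfolding kendall_kernel_def kendall_conv_def
  proof (rule measure_of_eq)
    fix A :: "real set" assume "A \<in> sigma_sets UNIV (sets borel)"
    then have [measurable]: "A \<in> sets borel" using sets.sigma_sets_eq[of "borel :: real measure"] by simp
    define \<Phi> where "\<Phi> x' = (\<integral>\<^sup>+y. ennreal (kendall_dd \<alpha> x' y A) \<partial>\<nu>)" for x'
    have [measurable]: "(\<lambda>y. kendall_dd \<alpha> x y A) \<in> borel_measurable borel"
      by (simp add: kendall_dd_eq_kendall_mean)
    have dd_abs: "kendall_dd \<alpha> x' y A = kendall_dd \<alpha> x y A" if "\<bar>x'\<bar> = \<bar>x\<bar>" for x' y
      using that unfolding kendall_dd_def by simp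
    have "AE x' in sym_delta x. \<bar>x'\<bar> = \<bar>x\<bar>"
      unfolding sym_delta_eq_distr_unif01 by (subst AE_distr_iff) auto
    then have "AE x' in sym_delta x. \<Phi> x' = \<Phi> x"
      by eventually_elim (unfold \<Phi>_def, intro nn_integral_cong arg_cong[where f = ennreal] dd_abs)
    then have "(\<integral>\<^sup>+x'. \<Phi> x' \<partial>sym_delta x) = (\<integral>\<^sup>+x'. \<Phi> x \<partial>sym_delta x)"
      by (rule nn_integral_cong_AE)
    also have "\<dots> = \<Phi> x"
      using prob_space.emeasure_space_1[OF prob_space_sym_delta] by simp
    also have "\<dots> = ennreal (\<integral>y. kendall_dd \<alpha> x y A \<partial>\<nu>)"
      unfolding \<Phi>_def using kendall_dd_bounds
      by (intro nn_integral_eq_integral integrable_const_bound[where B = 1]) auto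
    also have "(\<integral>y. kendall_dd \<alpha> x y A \<partial>\<nu>) = (\<integral>z. indicator A z \<partial>kernel_rep x)"
      by (subst integral_kernel_rep[where B = 1]) (auto simp: kendall_dd_eq_kendall_mean)
    finally show "(\<integral>\<^sup>+x'. \<integral>\<^sup>+y. ennreal (kendall_dd \<alpha> x' y A) \<partial>\<nu> \<partial>sym_delta x) = emeasure (kernel_rep x) A"
      by (simp add: \<Phi>_def K.emeasure_eq_measure sets_K)
  qed auto
  also have "\<dots> = kernel_rep x"
    using measure_of_of_measure[of "kernel_rep x"] by (simp add: sets_K kernel_rep_def)
  finally show ?thesis .
qed

lemma prob_space_kendall_kernel: "prob_space (kendall_kernel \<alpha> \<nu> x)"
  by (simp add: kendall_kernel_eq_kernel_rep prob_space_kernel_rep)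

lemma sets_kendall_kernel [measurable_cong]: "sets (kendall_kernel \<alpha> \<nu> x) = sets borel"
  by (simp add: kendall_kernel_eq_kernel_rep kernel_rep_def)

lemma integral_kendall_kernel:
  assumes "f \<in> borel_measurable borel" and "\<And>z. \<bar>f z\<bar> \<le> B"
  shows "(\<integral>z. f z \<partial>kendall_kernel \<alpha> \<nu> x) = (\<integral>y. kendall_mean \<alpha> f x y \<partial>\<nu>)"
  by (simp add: kendall_kernel_eq_kernel_rep integral_kernel_rep[OF assms])

lemma integral_kendall_kernel_Psi:
  assumes "0 < s"
  shows "(\<integral>z. Psi \<alpha> (z / s) \<partial>kendall_kernel \<alpha> \<nu> x) = funG \<alpha> \<nu> s * Psi \<alpha> (x / s)"
proof -
  have "(\<integral>z. Psi \<alpha> (z / s) \<partial>kendall_kernel \<alpha> \<nu> x) = (\<integral>y. kendall_mean \<alpha> (\<lambda>z. Psi \<alpha> (z / s)) x y \<partial>\<nu>)"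
    by (rule integral_kendall_kernel[where B = 1]) (use Psi_nonneg Psi_le_1 in auto)
  also have "\<dots> = (\<integral>y. Psi \<alpha> (x / s) * Psi \<alpha> (y / s) \<partial>\<nu>)"
    by (simp only: kendall_mean_Psi[OF assms])
  finally show ?thesis by (simp add: funG_def mult.commute)
qed

lemma measure_kendall_kernel_interval:
  assumes a: "0 < a"
  shows "measure (kendall_kernel \<alpha> \<nu> x) {-a..a}
    = funG \<alpha> \<nu> a * indicator {-a..a} x + funH \<alpha> \<nu> a * Psi \<alpha> (x / a)"
proof -
  interpret prob_space \<nu> by (rule prob_space_nu)
  define ind where "ind z = (indicator {-a..a} z :: real)" for z
  define X where "X = (\<bar>x\<bar> / a) powr \<alpha>"
  have [measurable]: "ind \<in> borel_measurable borel" unfolding ind_def by simp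
  have Psi_eq: "Psi \<alpha> (z / a) = ind z - ind z * (\<bar>z\<bar> / a) powr \<alpha>" for z
    using Psi_divide_eq[OF a, of z] unfolding ind_def by (auto simp: indicator_def abs_le_iff)
  have int_ind: "integrable \<nu> ind"
    by (rule integrable_const_bound[where B = 1]) (auto simp: ind_def indicator_def)
  have int_pow: "integrable \<nu> (\<lambda>y. ind y * (\<bar>y\<bar> / a) powr \<alpha>)"
  proof (rule integrable_const_bound[where B = 1])
    show "AE y in \<nu>. norm (ind y * (\<bar>y\<bar> / a) powr \<alpha>) \<le> 1"
      using a alpha_pos by (auto simp: ind_def indicator_def abs_le_iff intro!: powr_le1)
  qed measurable
  have integral_ind: "(\<integral>y. ind y \<partial>\<nu>) = 2 * distF \<nu> a - 1"
    unfolding ind_def using measure_nu_interval[of a] a by simp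
  have G: "funG \<alpha> \<nu> a = (2 * distF \<nu> a - 1) - (\<integral>y. ind y * (\<bar>y\<bar> / a) powr \<alpha> \<partial>\<nu>)"
    unfolding funG_def Psi_eq using int_ind int_pow integral_ind by simp
  have "(\<integral>z. ind z \<partial>kendall_kernel \<alpha> \<nu> x) = (\<integral>y. kendall_mean \<alpha> ind x y \<partial>\<nu>)"
    by (rule integral_kendall_kernel[where B = 1]) (auto simp: ind_def indicator_def)
  also have "\<dots> = (\<integral>y. ind x * (ind y - X * (ind y * (\<bar>y\<bar> / a) powr \<alpha>)) \<partial>\<nu>)"
    unfolding ind_def kendall_mean_interval[OF a] X_def by (simp add: algebra_simps)
  also have "\<dots> = ind x * ((\<integral>y. ind y \<partial>\<nu>) - X * (\<integral>y. ind y * (\<bar>y\<bar> / a) powr \<alpha> \<partial>\<nu>))"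
    using int_ind int_pow by simp
  also have "\<dots> = funG \<alpha> \<nu> a * ind x + funH \<alpha> \<nu> a * (ind x - ind x * X)"
    unfolding integral_ind funH_def G by (simp add: algebra_simps)
  also have "ind x - ind x * X = Psi \<alpha> (x / a)"
    unfolding Psi_eq X_def ..
  finally show ?thesis unfolding ind_def by simp
qed

lemma integral_kendall_kernel_even_part:
  fixes f :: "real \<Rightarrow> real"
  assumes f [measurable]: "f \<in> borel_measurable borel" and bounded: "\<And>z. \<bar>f z\<bar> \<le> B"
  shows "(\<integral>z. (f z + f (-z)) / 2 \<partial>kendall_kernel \<alpha> \<nu> x) = (\<integral>z. f z \<partial>kendall_kernel \<alpha> \<nu> x)"
proof -
  have even_bounded: "\<bar>(f z + f (-z)) / 2\<bar> \<le> B" for z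
    using bounded[of z] bounded[of "-z"] by auto
  have "(\<integral>z. (f z + f (-z)) / 2 \<partial>kendall_kernel \<alpha> \<nu> x)
      = (\<integral>y. kendall_mean \<alpha> (\<lambda>z. (f z + f (-z)) / 2) x y \<partial>\<nu>)"
    by (rule integral_kendall_kernel[OF _ even_bounded]) measurable
  also have "\<dots> = (\<integral>y. kendall_mean \<alpha> f x y \<partial>\<nu>)"
    by (simp only: kendall_mean_even_part[OF f bounded])
  also have "\<dots> = (\<integral>z. f z \<partial>kendall_kernel \<alpha> \<nu> x)"
    by (rule integral_kendall_kernel[OF f bounded, symmetric])
  finally show ?thesis .
qed

lemma integral_kendall_kernel_zero:
  fixes f :: "real \<Rightarrow> real"
  assumes f [measurable]: "f \<in> borel_measurable borel" and bounded: "\<And>z. \<bar>f z\<bar> \<le> B"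
  shows "(\<integral>z. f z \<partial>kendall_kernel \<alpha> \<nu> 0) = (\<integral>z. f z \<partial>\<nu>)"
  unfolding integral_kendall_kernel[OF f bounded] kendall_mean_zero_left
  by (rule integral_nu_even_part[OF f bounded])

end

section \<open>Iterating the truncated kernel\<close>

definition walk_profile :: "real \<Rightarrow> real \<Rightarrow> real \<Rightarrow> real \<times> real \<times> real \<Rightarrow> real \<Rightarrow> real" where
  "walk_profile \<alpha> a t c z = (case c of (p, q, r) \<Rightarrow>
     p * Psi \<alpha> (z / t) + q * indicator {-a..a} z + r * Psi \<alpha> (z / a))"

definition truncate_coeffs :: "real \<Rightarrow> real \<times> real \<times> real \<Rightarrow> real \<times> real \<times> real" where
  "truncate_coeffs P = (\<lambda>(p, q, r). (p / 2, P / 2 * p + q, (1 - P) / 2 * p + r))"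

definition kernel_coeffs :: "real \<Rightarrow> real \<Rightarrow> real \<Rightarrow> real \<times> real \<times> real \<Rightarrow> real \<times> real \<times> real" where
  "kernel_coeffs Gt Ga Ha = (\<lambda>(p, q, r). (Gt * p, Ga * q, Ha * q + Ga * r))"

lemma walk_profile_measurable [measurable]: "walk_profile \<alpha> a t c \<in> borel_measurable borel"
  unfolding walk_profile_def by (cases c) simp

lemma abs_truncated_walk_profile_le:
  "\<bar>indicator {..a} z * walk_profile \<alpha> a t (p, q, r) z\<bar> \<le> \<bar>p\<bar> + \<bar>q\<bar> + \<bar>r\<bar>"
proof -
  have "\<bar>p * Psi \<alpha> (z / t)\<bar> \<le> \<bar>p\<bar>" and "\<bar>r * Psi \<alpha> (z / a)\<bar> \<le> \<bar>r\<bar>"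
    and "\<bar>q * indicator {-a..a} z\<bar> \<le> \<bar>q\<bar>"
    using Psi_nonneg Psi_le_1 by (auto simp: abs_mult mult_left_le indicator_def)
  then have "\<bar>walk_profile \<alpha> a t (p, q, r) z\<bar> \<le> \<bar>p\<bar> + \<bar>q\<bar> + \<bar>r\<bar>"
    unfolding walk_profile_def by (smt (verit) split_conv)
  then show ?thesis by (auto simp: indicator_def)
qed

lemma walk_coeffs_closed_form:
  fixes b d :: real
  assumes "d \<noteq> 0"
  shows "((kernel_coeffs (2 * b) (b + d) Ha \<circ> truncate_coeffs P) ^^ k) (1, 0, 0) =
    (b ^ k, P * (b + d) * ((b + d) ^ k - b ^ k) / (2 * d),
     Ha * P * real k * (b + d) ^ k / (2 * d) +
       (Ha * P * (b + d) / (2 * d) - (P * Ha + (1 - P) * (b + d)) / 2) * (b ^ k - (b + d) ^ k) / d)"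
proof (induction k)
  case (Suc k)
  with assms show ?case by (simp add: kernel_coeffs_def truncate_coeffs_def field_simps)
qed simp

lemma walk_coeffs_sum_closed_form:
  assumes "2 * Ga - Gt \<noteq> 0" and "1 \<le> n"
  shows "(case ((kernel_coeffs Gt Ga Ha \<circ> truncate_coeffs P) ^^ n) (1, 0, 0) of (p, q, r) \<Rightarrow> p + q + r) =
    (let D = 2 * Ga - Gt;
         C1 = (Gt / 2 + Ha * P / 2 + Ga / 2) - Ga / D * (Ga + Ha * P * (1 - Gt / D));
         C2 = Ha * P / D;
         C3 = (Ha * P + Ga) / D - 2 * Ha * Ga * P / D\<^sup>2
     in C1 * (Gt / 2) ^ (n - 1) + Ga ^ n * (C2 * real n + C3))"
proof -
  obtain m where n: "n = Suc m" using assms(2) by (cases n) auto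
  define b where "b = Gt / 2"
  define d where "d = Ga - b"
  have Gt: "Gt = 2 * b" and Ga: "Ga = b + d" and "d \<noteq> 0"
    using assms(1) by (simp_all add: b_def d_def)
  then show ?thesis
    unfolding Gt Ga walk_coeffs_closed_form[OF \<open>d \<noteq> 0\<close>] n
    by (simp add: Let_def field_simps power2_eq_square)
qed

context kendall_index
begin

lemma even_part_truncated_walk_profile:
  assumes a: "0 < a" and at: "a \<le> t"
  shows "(indicator {..a} z * walk_profile \<alpha> a t c z + indicator {..a} (-z) * walk_profile \<alpha> a t c (-z)) / 2
    = walk_profile \<alpha> a t (truncate_coeffs (Psi \<alpha> (a / t)) c) z"
proof -
  obtain p q r where c: "c = (p, q, r)" by (cases c)
  have t: "0 < t" using a at by simp
  have sym: "Psi \<alpha> (-z / s) = Psi \<alpha> (z / s)" "(indicator {-a..a} (-z) :: real) = indicator {-a..a} z" for s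
    by (auto simp: Psi_def indicator_def)
  have P: "Psi \<alpha> (a / t) = 1 - (a / t) powr \<alpha>" using Psi_divide_eq[OF t, of a] a at by simp
  show ?thesis
  proof (cases "\<bar>z\<bar> \<le> a")
    case True
    then have ind: "(indicator {..a} z :: real) = 1" "(indicator {..a} (-z) :: real) = 1"
      "(indicator {-a..a} z :: real) = 1"
      by (auto simp: indicator_def abs_le_iff)
    have Psi_z: "Psi \<alpha> (z / a) = 1 - (\<bar>z\<bar> / a) powr \<alpha>" "Psi \<alpha> (z / t) = 1 - (\<bar>z\<bar> / t) powr \<alpha>"
      using Psi_divide_eq[OF a, of z] Psi_divide_eq[OF t, of z] True at by simp_all
    have pow: "(\<bar>z\<bar> / t) powr \<alpha> = (a / t) powr \<alpha> * (\<bar>z\<bar> / a) powr \<alpha>"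
      using a t by (simp add: powr_mult[symmetric])
    show ?thesis
      unfolding c walk_profile_def truncate_coeffs_def prod.case sym ind Psi_z P pow
      by (simp add: field_simps)
  next
    case False
    then have vanish: "(indicator {-a..a} z :: real) = 0" "Psi \<alpha> (z / a) = 0"
      using Psi_divide_eq[OF a, of z] by (auto simp: indicator_def abs_le_iff)
    have "(indicator {..a} z :: real) + indicator {..a} (-z) = 1"
      using False a by (auto simp: indicator_def abs_le_iff)
    then show ?thesis
      unfolding c walk_profile_def truncate_coeffs_def prod.case sym vanish
      by (simp add: distrib_right[symmetric])
  qed
qed

end

context kendall_walk
begin

definition walk_step :: "real \<Rightarrow> real \<Rightarrow> real \<times> real \<times> real \<Rightarrow> real \<times> real \<times> real" where
  "walk_step a t = kernel_coeffs (funG \<alpha> \<nu> t) (funG \<alpha> \<nu> a) (funH \<alpha> \<nu> a) \<circ> truncate_coeffs (Psi \<alpha> (a / t))"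

lemma integral_kendall_kernel_walk_profile:
  assumes a: "0 < a" and t: "0 < t"
  shows "(\<integral>z. walk_profile \<alpha> a t c z \<partial>kendall_kernel \<alpha> \<nu> x)
    = walk_profile \<alpha> a t (kernel_coeffs (funG \<alpha> \<nu> t) (funG \<alpha> \<nu> a) (funH \<alpha> \<nu> a) c) x"
proof -
  interpret prob_space "kendall_kernel \<alpha> \<nu> x" by (rule prob_space_kendall_kernel)
  obtain p q r where c: "c = (p, q, r)" by (cases c)
  have "integrable (kendall_kernel \<alpha> \<nu> x) (\<lambda>z. Psi \<alpha> (z / s))" for s
    by (rule integrable_const_bound[where B = 1]) (use Psi_nonneg Psi_le_1 in auto)
  moreover have "integrable (kendall_kernel \<alpha> \<nu> x) (\<lambda>z. indicator {-a..a} z :: real)"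
    by (rule integrable_const_bound[where B = 1]) (auto simp: indicator_def)
  ultimately show ?thesis
    by (simp add: c walk_profile_def kernel_coeffs_def integral_kendall_kernel_Psi[OF a]
        integral_kendall_kernel_Psi[OF t] measure_kendall_kernel_interval[OF a] algebra_simps)
qed

lemma integral_kendall_kernel_truncated_walk_profile:
  assumes a: "0 < a" and at: "a \<le> t"
  shows "(\<integral>z. indicator {..a} z * walk_profile \<alpha> a t c z \<partial>kendall_kernel \<alpha> \<nu> x)
    = walk_profile \<alpha> a t (walk_step a t c) x"
proof -
  obtain p q r where c: "c = (p, q, r)" by (cases c)
  have "(\<integral>z. indicator {..a} z * walk_profile \<alpha> a t c z \<partial>kendall_kernel \<alpha> \<nu> x)
      = (\<integral>z. walk_profile \<alpha> a t (truncate_coeffs (Psi \<alpha> (a / t)) c) z \<partial>kendall_kernel \<alpha> \<nu> x)"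
    unfolding c
    by (subst integral_kendall_kernel_even_part[symmetric, OF _ abs_truncated_walk_profile_le])
      (simp_all add: even_part_truncated_walk_profile[OF a at])
  also have "\<dots> = walk_profile \<alpha> a t (walk_step a t c) x"
    using a at by (simp add: integral_kendall_kernel_walk_profile walk_step_def)
  finally show ?thesis .
qed

lemma kendall_inner_eq_walk_profile:
  assumes "0 < a" and "a \<le> t"
  shows "kendall_inner \<alpha> \<nu> a t k x = walk_profile \<alpha> a t ((walk_step a t ^^ k) (1, 0, 0)) x"
proof (induction k arbitrary: x)
  case 0
  then show ?case by (simp add: walk_profile_def)
next
  case (Suc k)
  then show ?case
    by (simp add: integral_kendall_kernel_truncated_walk_profile[OF assms])
qed

lemma kendall_I_eq_walk_coeffs_sum:
  assumes a: "0 < a" and at: "a \<le> t" and n: "1 \<le> n"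
  shows "kendall_I \<alpha> \<nu> n a t = (case (walk_step a t ^^ n) (1, 0, 0) of (p, q, r) \<Rightarrow> p + q + r)"
proof -
  obtain k where k: "n = Suc k" using n by (cases n) auto
  obtain p q r where c: "(walk_step a t ^^ k) (1, 0, 0) = (p, q, r)" by (cases "(walk_step a t ^^ k) (1, 0, 0)")
  have "kendall_I \<alpha> \<nu> n a t = (\<integral>z. indicator {..a} z * walk_profile \<alpha> a t (p, q, r) z \<partial>\<nu>)"
    by (simp add: kendall_I_def k kendall_inner_eq_walk_profile[OF a at] c)
  also have "\<dots> = (\<integral>z. indicator {..a} z * walk_profile \<alpha> a t (p, q, r) z \<partial>kendall_kernel \<alpha> \<nu> 0)"
    by (rule integral_kendall_kernel_zero[symmetric, OF _ abs_truncated_walk_profile_le]) simp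
  also have "\<dots> = walk_profile \<alpha> a t ((walk_step a t ^^ n) (1, 0, 0)) 0"
    by (simp add: integral_kendall_kernel_truncated_walk_profile[OF a at] k c)
  also have "\<dots> = (case (walk_step a t ^^ n) (1, 0, 0) of (p, q, r) \<Rightarrow> p + q + r)"
    using a by (simp add: walk_profile_def split: prod.split)
  finally show ?thesis .
qed

end

theorem mainTheorem7:
  fixes \<alpha> a t :: real and \<nu> :: "real measure"
  assumes "\<alpha> > 0"
    and "sym_prob \<nu>"
    and "measure \<nu> {0} = 0"
    and "0 < a" and "a \<le> t"
    and "measure \<nu> {a} = 0" and "measure \<nu> {t} = 0"
    and "funG \<alpha> \<nu> t \<noteq> 2 * funG \<alpha> \<nu> a"
  shows "(kendall_I \<alpha> \<nu> 1 a t =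
           funG \<alpha> \<nu> t / 2 + funH \<alpha> \<nu> a * Psi \<alpha> (a / t) / 2 + funG \<alpha> \<nu> a / 2) \<and>
         (\<forall>n::nat. n \<ge> 2 \<longrightarrow>
           (let Gt = funG \<alpha> \<nu> t; Ga = funG \<alpha> \<nu> a; Ha = funH \<alpha> \<nu> a; P = Psi \<alpha> (a / t);
                D = 2 * Ga - Gt;
                C1 = kendall_I \<alpha> \<nu> 1 a t - Ga / D * (Ga + Ha * P * (1 - Gt / D));
                C2 = Ha * P / D;
                C3 = (Ha * P + Ga) / D - 2 * Ha * Ga * P / D^2
            in kendall_I \<alpha> \<nu> n a t = C1 * (Gt / 2) ^ (n - 1) + Ga ^ n * (C2 * real n + C3)))"
proof -
  interpret kendall_walk \<alpha> \<nu> by unfold_locales (use assms(1,2) in auto)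
  have I_sum: "kendall_I \<alpha> \<nu> n a t = (case ((kernel_coeffs (funG \<alpha> \<nu> t) (funG \<alpha> \<nu> a) (funH \<alpha> \<nu> a)
      \<circ> truncate_coeffs (Psi \<alpha> (a / t))) ^^ n) (1, 0, 0) of (p, q, r) \<Rightarrow> p + q + r)" if "1 \<le> n" for n
    using kendall_I_eq_walk_coeffs_sum[OF assms(4,5) that] by (simp add: walk_step_def)
  have I1: "kendall_I \<alpha> \<nu> 1 a t = funG \<alpha> \<nu> t / 2 + funH \<alpha> \<nu> a * Psi \<alpha> (a / t) / 2 + funG \<alpha> \<nu> a / 2"
    using I_sum[of 1] by (simp add: kernel_coeffs_def truncate_coeffs_def field_simps)
  have D: "2 * funG \<alpha> \<nu> a - funG \<alpha> \<nu> t \<noteq> 0" using assms(8) by simp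
  note closed_form = walk_coeffs_sum_closed_form[OF D,
      where Ha = "funH \<alpha> \<nu> a" and P = "Psi \<alpha> (a / t)", folded I1, unfolded Let_def]
  show ?thesis
    unfolding Let_def
    by (intro conjI allI impI I1) (subst I_sum, simp, rule closed_form, simp)
qed

end
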